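(* Fix integers $q\ge 1$ and $k\ge 4$, and let $G(q,k)$ be the graph on vertex set $\{v_0,v_1,\ldots,v_{kq}\}$ in which, with all indices taken modulo $kq+1$, the neighbourhood of $v_i$ is $$\{v_{i-1},v_{i+1}\}\cup\{v_{i+kj+m} : m=2,3,\ldots,k-1,\ j=0,1,\ldots,q-1\}.$$ Then $G(q,k)$ is $2K_2$-free.
   Context: $2K_2$ denotes the disjoint union of two copies of $K_2$ (i.e. two disjoint edges with no edges between them). A graph is $H$-free if it contains no induced subgraph isomorphic to $H$. *)

theory Defs
  imports Main
begin

definition Gverts :: "int \<Rightarrow> int \<Rightarrow> int set" where
  "Gverts q k = {0..k*q}"

definition Gnbhd :: "int \<Rightarrow> int \<Rightarrow> int \<Rightarrow> int set" where
  "Gnbhd q k i =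
     {(i - 1) mod (k*q+1), (i + 1) mod (k*q+1)} \<union>
     {(i + k*j + m) mod (k*q+1) | m j. 2 \<le> m \<and> m \<le> k - 1 \<and> 0 \<le> j \<and> j \<le> q - 1}"

definition Gadj :: "int \<Rightarrow> int \<Rightarrow> int \<Rightarrow> int \<Rightarrow> bool" where
  "Gadj q k u v \<longleftrightarrow> u \<in> Gverts q k \<and> v \<in> Gverts q k \<and> v \<in> Gnbhd q k u"

definition twoK2_free :: "'a set \<Rightarrow> ('a \<Rightarrow> 'a \<Rightarrow> bool) \<Rightarrow> bool" where
  "twoK2_free V E \<longleftrightarrow>
     \<not> (\<exists>a\<in>V. \<exists>b\<in>V. \<exists>c\<in>V. \<exists>d\<in>V. distinct [a,b,c,d] \<and> E a b \<and> E c d \<and>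
          \<not> E a c \<and> \<not> E c a \<and> \<not> E a d \<and> \<not> E d a \<and>
          \<not> E b c \<and> \<not> E c b \<and> \<not> E b d \<and> \<not> E d b)"

end

(*
  G(q,k) is the circulant graph on the integers modulo n = kq+1, and its non-adjacent pairs
  are exactly those whose difference is congruent to k t with |t| <= q-1.  If ab and cd
  formed an induced 2K2, the four non-edges would give c-a = k t1, d-a = k t2, c-b = k t3,
  d-b = k t4 modulo n.  Then b-a = k (t1-t3) = k (t2-t4); since k is invertible modulo n and
  all t's are small, t1-t3 = t2-t4.  This forces |t1-t3| <= q-1 or |t2-t1| <= q-1, and as
  d-c = k (t2-t1), one of ab, cd would be a non-edge.
*)

theory Submission
  imports Defs "HOL-Number_Theory.Cong"
begin

(* G(q,k) is the circulant graph modulo kq+1 with this connection set; kq represents the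
   offset -1. *)
definition Gconn :: "int \<Rightarrow> int \<Rightarrow> int set" where
  "Gconn q k = {1, k*q} \<union> {k*j + m | m j. 2 \<le> m \<and> m \<le> k - 1 \<and> 0 \<le> j \<and> j \<le> q - 1}"

lemma Gnbhd_eq_image: "Gnbhd q k u = (\<lambda>r. (u + r) mod (k*q+1)) ` Gconn q k"
proof -
  have "u + k*q = (u - 1) + (k*q+1)" by simp
  then have "(u - 1) mod (k*q+1) = (u + k*q) mod (k*q+1)" by (metis mod_add_self2)
  then show ?thesis unfolding Gnbhd_def Gconn_def by (auto simp: add.assoc)
qed

lemma Gconn_subset:
  assumes "k \<ge> 1" "q \<ge> 1"
  shows "Gconn q k \<subseteq> {0..k*q}"
proof
  fix r assume "r \<in> Gconn q k"
  then consider "r = 1" | "r = k*q"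
    | m j where "r = k*j + m" "2 \<le> m" "m \<le> k - 1" "0 \<le> j" "j \<le> q - 1"
    unfolding Gconn_def by blast
  then show "r \<in> {0..k*q}"
  proof cases
    case (3 m j)
    have "k*j \<le> k*(q - 1)" using 3 assms by (intro mult_left_mono) auto
    then show ?thesis using 3 assms by (simp add: algebra_simps)
  qed (use assms mult_mono[of 1 k 1 q] in auto)
qed

lemma Gadj_iff_Gconn:
  assumes "k \<ge> 1" "q \<ge> 1"
  shows "Gadj q k u v \<longleftrightarrow>
    u \<in> Gverts q k \<and> v \<in> Gverts q k \<and> (v - u) mod (k*q+1) \<in> Gconn q k"
proof (cases "v \<in> Gverts q k")
  case True
  then have v: "v mod (k*q+1) = v" by (simp add: Gverts_def)
  have "v \<in> Gnbhd q k u \<longleftrightarrow> (v - u) mod (k*q+1) \<in> Gconn q k"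
  proof
    assume "v \<in> Gnbhd q k u"
    then obtain r where r: "r \<in> Gconn q k" "v = (u + r) mod (k*q+1)"
      unfolding Gnbhd_eq_image by blast
    then have "r mod (k*q+1) = r" using Gconn_subset[OF assms] by auto
    with r show "(v - u) mod (k*q+1) \<in> Gconn q k" by (simp add: mod_diff_left_eq)
  next
    assume "(v - u) mod (k*q+1) \<in> Gconn q k"
    moreover have "v = (u + (v - u) mod (k*q+1)) mod (k*q+1)" using v by (simp add: mod_add_right_eq)
    ultimately show "v \<in> Gnbhd q k u" unfolding Gnbhd_eq_image by blast
  qed
  then show ?thesis by (auto simp: Gadj_def)
qed (simp add: Gadj_def)

lemma mult_mod_mult_add_one:
  fixes k q t :: int
  assumes "k \<ge> 1" "\<bar>t\<bar> \<le> q - 1"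
  shows "(k*t) mod (k*q+1) = (if 0 \<le> t then k*t else k*(t+q) + 1)"
proof (cases "0 \<le> t")
  case True
  have "k*t \<le> k*(q - 1)" using True assms by (intro mult_left_mono) auto
  then show ?thesis using True assms by (simp add: algebra_simps)
next
  case False
  have "k*(t+q) \<le> k*(q - 1)" using False assms by (intro mult_left_mono) auto
  moreover have "0 \<le> k*(t+q)" using assms by simp
  ultimately have "(k*(t+q) + 1) mod (k*q+1) = k*(t+q) + 1"
    using assms by (intro mod_pos_pos_trivial) (simp_all add: algebra_simps)
  moreover have "k*t = (k*(t+q) + 1) + (-1)*(k*q+1)" by (simp add: algebra_simps)
  ultimately show ?thesis using False by (metis mod_mult_self1)
qed

lemma mem_Gconn_iff:
  assumes "k \<ge> 2" "0 \<le> r" "r \<le> k*q"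
  shows "r \<in> Gconn q k \<longleftrightarrow> r = 1 \<or> r = k*q \<or> 2 \<le> r mod k"
proof
  assume "r \<in> Gconn q k"
  then consider "r = 1" | "r = k*q"
    | m j where "r = k*j + m" "2 \<le> m" "m \<le> k - 1"
    unfolding Gconn_def by blast
  then show "r = 1 \<or> r = k*q \<or> 2 \<le> r mod k"
  proof cases
    case (3 m j)
    then have "r mod k = m" by simp
    with 3 show ?thesis by simp
  qed auto
next
  assume "r = 1 \<or> r = k*q \<or> 2 \<le> r mod k"
  moreover have "r \<in> Gconn q k" if m: "2 \<le> r mod k"
  proof -
    have r: "r = k*(r div k) + r mod k" by simp
    then have "k*(r div k) < k*q" using m assms by linarith
    then have "r div k \<le> q - 1" using assms by simp
    moreover have "0 \<le> r div k" using assms by (simp add: pos_imp_zdiv_nonneg_iff)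
    moreover have "r mod k \<le> k - 1" using assms by simp
    ultimately show ?thesis using m r unfolding Gconn_def by blast
  qed
  ultimately show "r \<in> Gconn q k" unfolding Gconn_def by blast
qed

lemma not_mem_Gconn_iff:
  assumes "k \<ge> 2" "q \<ge> 1" "0 \<le> r" "r \<le> k*q"
  shows "r \<notin> Gconn q k \<longleftrightarrow> (\<exists>t. \<bar>t\<bar> \<le> q - 1 \<and> r = (k*t) mod (k*q+1))"
proof
  assume "r \<notin> Gconn q k"
  then have r: "r \<noteq> 1" "r \<noteq> k*q" "r mod k < 2" using mem_Gconn_iff[OF assms(1,3,4)] by auto
  define j where "j = r div k"
  have rj: "r = k*j + r mod k" by (simp add: j_def)
  have j: "0 \<le> j" using assms by (simp add: j_def pos_imp_zdiv_nonneg_iff)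
  have "0 \<le> r mod k" using assms by simp
  then consider "r mod k = 0" | "r mod k = 1" using r by linarith
  then show "\<exists>t. \<bar>t\<bar> \<le> q - 1 \<and> r = (k*t) mod (k*q+1)"
  proof cases
    case 1
    then have "k*j < k*q" using rj r assms by linarith
    then have "j \<le> q - 1" using assms by simp
    then have "\<bar>j\<bar> \<le> q - 1" "r = (k*j) mod (k*q+1)"
      using 1 rj j mult_mod_mult_add_one[of k j q] assms by auto
    then show ?thesis by blast
  next
    case 2
    then have "k*j < k*q" using rj assms by linarith
    then have "j \<le> q - 1" using assms by simp
    moreover have "j \<noteq> 0" using rj 2 r by auto
    ultimately have "\<bar>j - q\<bar> \<le> q - 1" "r = (k*(j - q)) mod (k*q+1)"
      using 2 rj j mult_mod_mult_add_one[of k "j - q" q] assms by auto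
    then show ?thesis by blast
  qed
next
  assume "\<exists>t. \<bar>t\<bar> \<le> q - 1 \<and> r = (k*t) mod (k*q+1)"
  then obtain t where t: "\<bar>t\<bar> \<le> q - 1" "r = (k*t) mod (k*q+1)" by blast
  show "r \<notin> Gconn q k"
  proof (cases "0 \<le> t")
    case True
    then have r: "r = k*t" using t mult_mod_mult_add_one[of k t q] assms by simp
    have "k*t \<le> k*(q - 1)" using True t assms by (intro mult_left_mono) auto
    moreover have "k*(q - 1) = k*q - k" by (simp add: algebra_simps)
    ultimately have "r < k*q" using r assms by linarith
    moreover have "r mod k = 0" using r by simp
    ultimately show ?thesis using mem_Gconn_iff[OF assms(1,3,4)] assms by auto
  next
    case False
    then have r: "r = k*(t+q) + 1" using t mult_mod_mult_add_one[of k t q] assms by simp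
    have "k*1 \<le> k*(t+q)" using t assms by (intro mult_left_mono) auto
    then have "r \<noteq> 1" using r assms by linarith
    moreover have "r mod k = 1" using r assms by simp
    ultimately show ?thesis using mem_Gconn_iff[OF assms(1,3,4)] by auto
  qed
qed

lemma not_Gadj_iff:
  assumes "k \<ge> 2" "q \<ge> 1" "u \<in> Gverts q k" "v \<in> Gverts q k"
  shows "\<not> Gadj q k u v \<longleftrightarrow> (\<exists>t. \<bar>t\<bar> \<le> q - 1 \<and> [v - u = k*t] (mod k*q+1))"
proof -
  have "0 < k*q+1" using assms by (simp add: Gverts_def)
  then have "0 \<le> (v - u) mod (k*q+1)" "(v - u) mod (k*q+1) \<le> k*q"
    using pos_mod_bound[of "k*q+1" "v - u"] by simp_all
  then show ?thesis
    using Gadj_iff_Gconn not_mem_Gconn_iff assms by (auto simp: cong_def)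
qed

lemma cong_mult_cancel_small:
  fixes k q x y :: int
  assumes "[k*x = k*y] (mod k*q+1)" "\<bar>x - y\<bar> < k*q + 1"
  shows "x = y"
proof -
  have "coprime k (k*q+1)"
    using gcd_add_mult[of k q 1] by (simp add: coprime_iff_gcd_eq_1 mult.commute)
  then have "[x = y] (mod k*q+1)"
    using assms(1) by (simp add: cong_mult_lcancel)
  then have "(k*q+1) dvd (x - y)"
    by (simp add: cong_iff_dvd_diff)
  show ?thesis
  proof (rule ccontr)
    assume "x \<noteq> y"
    with \<open>(k*q+1) dvd (x - y)\<close> have "\<bar>k*q+1\<bar> \<le> \<bar>x - y\<bar>" by (intro dvd_imp_le_int) simp_all
    with assms(2) show False by linarith
  qed
qed

lemma Gadj_two_edges_joined:
  assumes "q \<ge> 1" "k \<ge> 4" and ab: "Gadj q k a b" and cd: "Gadj q k c d"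
  shows "Gadj q k a c \<or> Gadj q k a d \<or> Gadj q k b c \<or> Gadj q k b d"
proof (rule ccontr)
  let ?n = "k*q+1"
  have V: "a \<in> Gverts q k" "b \<in> Gverts q k" "c \<in> Gverts q k" "d \<in> Gverts q k"
    using ab cd by (simp_all add: Gadj_def)
  have "k \<ge> 2" using assms by simp
  note not_adj = not_Gadj_iff[OF this assms(1)]
  assume "\<not> ?thesis"
  then obtain t1 t2 t3 t4 where
    bounds: "\<bar>t1\<bar> \<le> q - 1" "\<bar>t2\<bar> \<le> q - 1" "\<bar>t3\<bar> \<le> q - 1" "\<bar>t4\<bar> \<le> q - 1" and
    ac: "[c - a = k*t1] (mod ?n)" and ad: "[d - a = k*t2] (mod ?n)" and
    bc: "[c - b = k*t3] (mod ?n)" and bd: "[d - b = k*t4] (mod ?n)"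
    using not_adj[OF V(1,3)] not_adj[OF V(1,4)] not_adj[OF V(2,3)] not_adj[OF V(2,4)] by blast
  have ba1: "[b - a = k*(t1 - t3)] (mod ?n)" using cong_diff[OF ac bc] by (simp add: right_diff_distrib)
  have ba2: "[b - a = k*(t2 - t4)] (mod ?n)" using cong_diff[OF ad bd] by (simp add: right_diff_distrib)
  have dc: "[d - c = k*(t2 - t1)] (mod ?n)" using cong_diff[OF ad ac] by (simp add: right_diff_distrib)
  have "[k*(t1 - t3) = k*(t2 - t4)] (mod ?n)" using ba1 ba2 by (metis cong_sym cong_trans)
  moreover have "4*q \<le> k*q" using assms by (intro mult_right_mono) auto
  then have "\<bar>(t1 - t3) - (t2 - t4)\<bar> < k*q + 1" using bounds by linarith
  ultimately have "t1 - t3 = t2 - t4" by (rule cong_mult_cancel_small)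
  then have "\<bar>t1 - t3\<bar> \<le> q - 1 \<or> \<bar>t2 - t1\<bar> \<le> q - 1" using bounds by linarith
  moreover have "\<not> Gadj q k a b" if "\<bar>t1 - t3\<bar> \<le> q - 1"
    using not_adj[OF V(1,2)] ba1 that by blast
  moreover have "\<not> Gadj q k c d" if "\<bar>t2 - t1\<bar> \<le> q - 1"
    using not_adj[OF V(3,4)] dc that by blast
  ultimately show False using ab cd by blast
qed

theorem lemma2p3:
  fixes q k :: int
  assumes "q \<ge> 1" and "k \<ge> 4"
  shows "twoK2_free (Gverts q k) (Gadj q k)"
  unfolding twoK2_free_def using Gadj_two_edges_joined[OF assms] by blast

end
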